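(* Let $\rho,\pi,\gamma,\delta>0$, $0<\beta<1$, $\sigma>0$ with $\sigma\neq 1$, and assume $$\rho<\delta<\rho+\delta\sigma,\qquad \frac{\delta+\pi-\pi\beta}{\beta}-\frac{\delta-\rho}{\sigma}>0 .$$ Put $z^*=\left(\frac{\beta\gamma}{\delta+\pi}\right)^{\frac{1}{\beta-1}}$ and $\theta=\frac{\delta+\pi-\pi\beta}{\beta}-\frac{\delta-\rho}{\sigma}$. Let $c_1>0$, $z_0>0$ with $z_0\neq z^*$, and $c_0,k_0,h_0,u_0>0$ with $u_0=z_0k_0/h_0$. Define for $t\ge 0$ $$z(t)=\frac{z^*z_0}{\left[(z^{*1-\beta}-z_0^{1-\beta})e^{-\frac{(1-\beta)(\delta+\pi)}{\beta}t}+z_0^{1-\beta}\right]^{\frac{1}{1-\beta}}},\qquad F(t)=\int_0^t z(s)^{\frac{\sigma-\beta}{\sigma}}e^{-\theta s}\,ds,$$ and $K=\frac{k_0}{c_0 z_0^{\frac{\beta-\sigma}{\sigma}}}$. Assume $$c_0 z_0^{\frac{\beta}{\sigma}}=\left(\frac{c_1\delta}{(1-\beta)\gamma}\right)^{-\frac{1}{\sigma}},\qquad \lim_{t\to\infty}F(t)=K,$$ $$\frac{\gamma(1-\beta)(\rho-\delta+\delta\sigma)}{\delta}=\frac{u_0}{k_0}\Big[\sigma c_0z_0^{\beta-1}-(\rho+\pi-\pi\sigma)k_0z_0^{\beta-1}+\beta\gamma(1-\sigma)k_0\Big].$$ Define $$c(t)=c_0z_0^{\frac{\beta}{\sigma}}e^{-\frac{\rho-\delta}{\sigma}t}z(t)^{-\frac{\beta}{\sigma}},\qquad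 k(t)=\big(K-F(t)\big)c_0z_0^{\frac{\beta}{\sigma}}z(t)^{-1}e^{\frac{\delta+\pi-\pi\beta}{\beta}t},$$ $$h(t)=\frac{h_0\Big[\sigma c_0z_0^{\frac{\beta}{\sigma}}e^{-\frac{\rho-\delta}{\sigma}t}z(t)^{\beta-\frac{\beta}{\sigma}}+\big(\beta\gamma(1-\sigma)-(\rho+\pi-\pi\sigma)z(t)^{\beta-1}\big)\big(K-F(t)\big)c_0z_0^{\frac{\beta}{\sigma}}e^{\frac{\delta+\pi-\pi\beta}{\beta}t}\Big]}{z_0\big[\sigma c_0z_0^{\beta-1}-(\rho+\pi-\pi\sigma)k_0z_0^{\beta-1}+\beta\gamma(1-\sigma)k_0\big]},$$ $$u(t)=\frac{u_0}{k_0}\Big[\sigma c_0z_0^{\beta-1}-(\rho+\pi-\pi\sigma)k_0z_0^{\beta-1}+\beta\gamma(1-\sigma)k_0\Big]\cdot\frac{K-F(t)}{\big[\beta\gamma(1-\sigma)-(\rho+\pi-\pi\sigma)z(t)^{\beta-1}\big]\big(K-F(t)\big)+\sigma z(t)^{\beta-\frac{\beta}{\sigma}}e^{-\theta t}},$$ $$\lambda(t)=\frac{c_1\delta}{(1-\beta)\gamma}e^{(\rho-\delta)t}z(t)^{\beta},\qquad \mu(t)=c_1e^{(\rho-\delta)t}.$$ Then $(c,u,k,h,\lambda,\mu)$ is a solution of the first-order conditions of the Lucas–Uzawa problem, namely for all $t\ge0$: $$\lambda=c^{-\sigma},\quad u^{\beta}=\frac{\gamma(1-\beta)k^{\beta}h^{-\beta}}{\delta}\frac{\lambda}{\mu},\quad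 \dot k=\gamma k^{\beta}u^{1-\beta}h^{1-\beta}-\pi k-c,\quad \dot h=\delta(1-u)h,$$ $$\dot\lambda=-\lambda\gamma\beta u^{1-\beta}k^{\beta-1}h^{1-\beta}+\lambda(\rho+\pi),\quad \dot\mu=\mu(\rho-\delta),$$ with $c(0)=c_0$, $k(0)=k_0$, $h(0)=h_0$, $u(0)=u_0$, $z(0)=z_0$, and $z(t)=h(t)u(t)/k(t)$, and it satisfies the transversality conditions $\lim_{t\to\infty}e^{-\rho t}\lambda(t)k(t)=0$ and $\lim_{t\to\infty}e^{-\rho t}\mu(t)h(t)=0$.
   Context: Lucas–Uzawa model: a representative agent maximizes $\int_0^\infty \frac{c^{1-\sigma}-1}{1-\sigma}e^{-\rho t}\,dt$ over consumption $c$ and the fraction $u$ of labor allocated to production of physical capital, subject to $\dot k=\gamma k^\beta u^{1-\beta}h^{1-\beta}-\pi k-c$ and $\dot h=\delta(1-u)h$, where $k$ is physical capital, $h$ is human capital, $\rho$ the discount rate, $\pi$ the depreciation rate, $\gamma,\delta$ technology levels, $\beta$ the output elasticity of physical capital, $1/\sigma$ the elasticity of intertemporal substitution. The current-value Hamiltonian is $H=\frac{c^{1-\sigma}-1}{1-\sigma}+\lambda[\gamma k^\beta u^{1-\beta}h^{1-\beta}-\pi k-c]+\mu\delta(1-u)h$ with costate variables $\lambda,\mu$; the displayed equations are the Pontryagin first-order conditions. The variable $z$ denotes $hu/k$. *)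

theory Defs
  imports "HOL-Analysis.Analysis"
begin

end

theory Submission
  imports Defs
begin

text \<open>
  The ratio z = hu/k solves the Bernoulli equation z' = z ((\<delta> + \<pi>) / \<beta> - \<gamma> z^(1 - \<beta>)),
  whose explicit solution stays positive and converges to zs, so every power of z stays bounded.
  Put P = K - F. As F increases to K with an integrand of order exp (- \<theta> t), P is positive and
  P exp (\<theta> t) is bounded. Up to constants, k is P exp (\<eta> t) / z with \<eta> = (\<delta> + \<pi> - \<pi> \<beta>) / \<beta>,
  and h is the bracket N of its numerator, which satisfies N' = \<delta> N - G P C exp (\<eta> t) with G > 0;
  so exp (- \<delta> t) N decreases to 0, whence N, h and u are positive.
  The first-order conditions are then direct differentiations, and both transversality
  conditions reduce to a bounded factor times exp (((\<delta> - \<rho>) / \<sigma> - \<delta>) t), which decays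
  because \<delta> < \<rho> + \<delta> \<sigma>.
\<close>

lemma continuous_on_atLeast_of_derivative:
  fixes f f' :: "real \<Rightarrow> real"
  assumes "\<And>x. x \<ge> a \<Longrightarrow> (f has_real_derivative f' x) (at x within {a..})"
  shows "continuous_on {a..} f"
  using assms by (meson DERIV_continuous atLeast_iff continuous_on_eq_continuous_within)

lemma DERIV_nonpos_tendsto_imp_ge:
  fixes f f' :: "real \<Rightarrow> real"
  assumes deriv: "\<And>x. x \<ge> a \<Longrightarrow> (f has_real_derivative f' x) (at x within {a..})"
    and nonpos: "\<And>x. x > a \<Longrightarrow> f' x \<le> 0"
    and lim: "(f \<longlongrightarrow> L) at_top" and "a \<le> t"
  shows "L \<le> f t"
proof (rule tendsto_upperbound[OF lim])
  have "f s \<le> f t" if "t \<le> s" for s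
  proof (rule DERIV_nonpos_imp_decreasing_open[where f = f, OF that])
    fix x assume x: "t < x" "x < s"
    then have "at x within {a..} = at x"
      using \<open>a \<le> t\<close> by (intro at_within_interior) simp
    with deriv[of x] nonpos[of x] x \<open>a \<le> t\<close> show "\<exists>y. DERIV f x :> y \<and> y \<le> 0" by auto
  next
    show "continuous_on {t..s} f"
      using continuous_on_atLeast_of_derivative[of a f f'] deriv \<open>a \<le> t\<close>
      by (auto intro: continuous_on_subset)
  qed
  then show "\<forall>\<^sub>F s in at_top. f s \<le> f t"
    unfolding eventually_at_top_linorder by blast
qed simp

lemma DERIV_neg_tendsto_imp_gt:
  fixes f f' :: "real \<Rightarrow> real"
  assumes deriv: "\<And>x. x \<ge> a \<Longrightarrow> (f has_real_derivative f' x) (at x within {a..})"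
    and neg: "\<And>x. x > a \<Longrightarrow> f' x < 0"
    and lim: "(f \<longlongrightarrow> L) at_top" and "a \<le> t"
  shows "L < f t"
proof -
  have "L \<le> f (t + 1)"
    using assms by (intro DERIV_nonpos_tendsto_imp_ge[OF deriv _ lim]) (auto intro: less_imp_le)
  also have "f (t + 1) < f t"
  proof (rule DERIV_neg_imp_decreasing_open[where f = f])
    fix x assume x: "t < x" "x < t + 1"
    then have "at x within {a..} = at x"
      using \<open>a \<le> t\<close> by (intro at_within_interior) simp
    with deriv[of x] neg[of x] x \<open>a \<le> t\<close> show "\<exists>y. DERIV f x :> y \<and> y < 0" by auto
  next
    show "continuous_on {t..t + 1} f"
      using continuous_on_atLeast_of_derivative[of a f f'] deriv \<open>a \<le> t\<close>
      by (auto intro: continuous_on_subset)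
  qed simp
  finally show ?thesis .
qed

lemma integral_has_real_derivative_atLeast:
  fixes g :: "real \<Rightarrow> real"
  assumes "continuous_on {a..} g" "a \<le> t"
  shows "((\<lambda>x. integral {a..x} g) has_real_derivative g t) (at t within {a..})"
proof -
  have "((\<lambda>x. integral {a..x} g) has_real_derivative g t) (at t within {a..t+1})"
    using assms by (intro integral_has_real_derivative) (auto intro: continuous_on_subset)
  moreover have "at t within {a..t+1} = at t within {a..}"
    by (rule at_within_nhd[of _ "{..<t+1}"]) auto
  ultimately show ?thesis by simp
qed

lemma tendsto_exp_neg_at_top:
  fixes c :: real
  assumes "c < 0"
  shows "((\<lambda>t. exp (c * t)) \<longlongrightarrow> 0) at_top"
  using assms
  by (intro filterlim_compose[OF exp_at_bot] filterlim_tendsto_neg_mult_at_bot[OF tendsto_const _ filterlim_ident])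

lemma Bfun_tendsto:
  fixes f :: "'a \<Rightarrow> 'b::real_normed_vector"
  assumes "(f \<longlongrightarrow> L) F"
  shows "Bfun f F"
proof (rule BfunI)
  show "\<forall>\<^sub>F x in F. norm (f x) \<le> norm L + 1"
    using order_tendstoD(2)[OF tendsto_norm[OF assms], of "norm L + 1"]
    by (auto elim: eventually_mono)
qed

lemma Bfun_add:
  fixes f g :: "'a \<Rightarrow> 'b::real_normed_vector"
  assumes "Bfun f F" "Bfun g F"
  shows "Bfun (\<lambda>x. f x + g x) F"
proof -
  obtain M where M: "\<forall>\<^sub>F x in F. norm (f x) \<le> M" using assms(1) by (rule BfunE)
  obtain M' where M': "\<forall>\<^sub>F x in F. norm (g x) \<le> M'" using assms(2) by (rule BfunE)
  have "\<forall>\<^sub>F x in F. norm (f x + g x) \<le> M + M'"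
    using M M' by eventually_elim (rule norm_triangle_le, simp)
  then show ?thesis by (rule BfunI)
qed

lemma Bfun_mult:
  fixes f g :: "'a \<Rightarrow> 'b::real_normed_algebra"
  assumes "Bfun f F" "Bfun g F"
  shows "Bfun (\<lambda>x. f x * g x) F"
proof -
  obtain M where "M > 0" and M: "\<forall>\<^sub>F x in F. norm (f x) \<le> M" using assms(1) by (rule BfunE)
  obtain M' where "M' > 0" and M': "\<forall>\<^sub>F x in F. norm (g x) \<le> M'" using assms(2) by (rule BfunE)
  have "\<forall>\<^sub>F x in F. norm (f x * g x) \<le> M * M'"
  using M M'
  proof eventually_elim
    case (elim x)
    have "norm (f x * g x) \<le> norm (f x) * norm (g x)" by (rule norm_mult_ineq)
    also have "\<dots> \<le> M * M'" using elim \<open>M > 0\<close> by (intro mult_mono) auto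
    finally show ?case .
  qed
  then show ?thesis by (rule BfunI)
qed

lemma Bfun_mult_tendsto_zero:
  fixes f g :: "'a \<Rightarrow> 'b::real_normed_algebra"
  assumes "Bfun f F" "(g \<longlongrightarrow> 0) F"
  shows "((\<lambda>x. f x * g x) \<longlongrightarrow> 0) F"
  using bounded_bilinear.Bfun_prod_Zfun[OF bounded_bilinear_mult assms(1)] assms(2)
  by (simp add: tendsto_Zfun_iff)

lemma has_real_derivative_powr_of_growth:
  fixes f :: "real \<Rightarrow> real"
  assumes "(f has_real_derivative f x * r) (at x within S)" "f x > 0"
  shows "((\<lambda>s. f s powr p) has_real_derivative p * f x powr p * r) (at x within S)"
proof -
  have "((\<lambda>s. f s powr p) has_real_derivative p * f x powr (p - 1) * (f x * r)) (at x within S)"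
    by (rule DERIV_chain2[OF has_real_derivative_powr[OF assms(2)] assms(1)])
  moreover have "f x powr (p - 1) * f x = f x powr p"
    using assms(2) by (simp add: powr_diff)
  ultimately show ?thesis by (simp add: ac_simps)
qed

lemma integral_less_tendsto:
  fixes g :: "real \<Rightarrow> real"
  assumes cont: "continuous_on {a..} g" and pos: "\<And>t. t \<ge> a \<Longrightarrow> g t > 0"
    and lim: "((\<lambda>t. integral {a..t} g) \<longlongrightarrow> K) at_top" and "a \<le> t"
  shows "integral {a..t} g < K"
proof -
  have "0 < K - integral {a..t} g"
  proof (rule DERIV_neg_tendsto_imp_gt[where f = "\<lambda>x. K - integral {a..x} g" and f' = "\<lambda>x. - g x"])
    show "((\<lambda>x. K - integral {a..x} g) has_real_derivative - g x) (at x within {a..})" if "x \<ge> a" for x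
      using integral_has_real_derivative_atLeast[OF cont that] by (intro derivative_eq_intros) auto
    show "((\<lambda>x. K - integral {a..x} g) \<longlongrightarrow> 0) at_top"
      using tendsto_diff[OF tendsto_const lim, of K] by simp
  qed (use pos \<open>a \<le> t\<close> in auto)
  then show ?thesis by simp
qed

lemma integral_tail_le_exp:
  fixes g :: "real \<Rightarrow> real"
  assumes cont: "continuous_on {a..} g" and "\<theta> > 0"
    and lim: "((\<lambda>t. integral {a..t} g) \<longlongrightarrow> K) at_top"
    and bound: "\<And>t. t \<ge> T \<Longrightarrow> g t \<le> M * exp (- \<theta> * t)" and "a \<le> T" "T \<le> t"
  shows "K - integral {a..t} g \<le> M / \<theta> * exp (- \<theta> * t)"
proof -
  let ?Q = "\<lambda>s. M / \<theta> * exp (- \<theta> * s) - (K - integral {a..s} g)"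
  have "0 \<le> ?Q t"
  proof (rule DERIV_nonpos_tendsto_imp_ge[where a = T and f = ?Q and f' = "\<lambda>x. - M * exp (- \<theta> * x) + g x"])
    show "(?Q has_real_derivative - M * exp (- \<theta> * x) + g x) (at x within {T..})" if "x \<ge> T" for x
    proof -
      have "((\<lambda>s. integral {a..s} g) has_real_derivative g x) (at x within {a..})"
        using \<open>a \<le> T\<close> that by (intro integral_has_real_derivative_atLeast[OF cont]) simp
      then have "((\<lambda>s. integral {a..s} g) has_real_derivative g x) (at x within {T..})"
        by (rule DERIV_subset) (use \<open>a \<le> T\<close> in auto)
      then show ?thesis
        using \<open>\<theta> > 0\<close> by (auto intro!: derivative_eq_intros)
    qed
    show "- M * exp (- \<theta> * x) + g x \<le> 0" if "x > T" for x
      using bound[of x] that by simp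
    have "((\<lambda>s. M / \<theta> * exp (- \<theta> * s)) \<longlongrightarrow> M / \<theta> * 0) at_top"
      using \<open>\<theta> > 0\<close> by (intro tendsto_intros tendsto_exp_neg_at_top) simp
    from tendsto_diff[OF this tendsto_diff[OF tendsto_const lim, of K]]
    show "(?Q \<longlongrightarrow> 0) at_top" by simp
  qed (use \<open>T \<le> t\<close> in simp)
  then show ?thesis by simp
qed

text \<open>The solution of z' = (a / \<alpha>) z (1 - (z / A)^\<alpha>) with z 0 = B: its power z^(- \<alpha>) is affine
  in exp (- a t).\<close>

definition bernoulli_path :: "real \<Rightarrow> real \<Rightarrow> real \<Rightarrow> real \<Rightarrow> real \<Rightarrow> real" where
  "bernoulli_path \<alpha> a A B t =
     A * B / ((A powr \<alpha> - B powr \<alpha>) * exp (- a * t) + B powr \<alpha>) powr (1 / \<alpha>)"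

context
  fixes \<alpha> a A B :: real
  assumes \<alpha>: "\<alpha> > 0" and a: "a > 0" and A: "A > 0" and B: "B > 0"
begin

private definition Y :: "real \<Rightarrow> real" where
  "Y t = (A powr \<alpha> - B powr \<alpha>) * exp (- a * t) + B powr \<alpha>"

private lemma bernoulli_path_eq: "bernoulli_path \<alpha> a A B t = A * B * Y t powr (- 1 / \<alpha>)"
  by (simp add: bernoulli_path_def Y_def powr_minus_divide)

private lemma Y_pos:
  assumes "t \<ge> 0"
  shows "Y t > 0"
proof -
  have "Y t = A powr \<alpha> * exp (- a * t) + B powr \<alpha> * (1 - exp (- a * t))"
    by (simp add: Y_def algebra_simps)
  moreover have "exp (- a * t) \<le> 1"
    using a assms by simp
  ultimately show ?thesis
    using A B by (simp add: add_pos_nonneg)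
qed

lemma bernoulli_path_pos:
  assumes "t \<ge> 0"
  shows "bernoulli_path \<alpha> a A B t > 0"
  using Y_pos[OF assms] A B by (simp add: bernoulli_path_eq)

lemma bernoulli_path_0: "bernoulli_path \<alpha> a A B 0 = B"
proof -
  have "(A powr \<alpha>) powr (1 / \<alpha>) = A"
    using A \<alpha> by (simp add: powr_powr)
  then show ?thesis
    using A by (simp add: bernoulli_path_def)
qed

lemma bernoulli_path_has_real_derivative:
  assumes "t \<ge> 0"
  shows "(bernoulli_path \<alpha> a A B has_real_derivative
           bernoulli_path \<alpha> a A B t * (a / \<alpha>) * (1 - (bernoulli_path \<alpha> a A B t / A) powr \<alpha>))
           (at t within S)"
proof -
  define r where "r = - a * (A powr \<alpha> - B powr \<alpha>) * exp (- a * t) / Y t"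
  have "(Y has_real_derivative Y t * r) (at t within S)"
    unfolding Y_def[abs_def] r_def using Y_pos[OF assms]
    by (auto intro!: derivative_eq_intros simp: Y_def)
  then have deriv: "(bernoulli_path \<alpha> a A B has_real_derivative
               A * B * (- 1 / \<alpha> * Y t powr (- 1 / \<alpha>) * r)) (at t within S)"
    unfolding bernoulli_path_eq[abs_def]
    by (intro DERIV_cmult has_real_derivative_powr_of_growth Y_pos assms)
  have "bernoulli_path \<alpha> a A B t / A = B * Y t powr (- 1 / \<alpha>)"
    using A by (simp add: bernoulli_path_eq)
  then have "1 - (bernoulli_path \<alpha> a A B t / A) powr \<alpha> = 1 - B powr \<alpha> / Y t"
    using B \<alpha> Y_pos[OF assms] by (simp add: powr_mult powr_powr powr_minus_divide powr_divide)
  also have "\<dots> = (A powr \<alpha> - B powr \<alpha>) * exp (- a * t) / Y t"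
    using Y_pos[OF assms] by (simp add: Y_def field_simps)
  finally have "bernoulli_path \<alpha> a A B t * (a / \<alpha>) * (1 - (bernoulli_path \<alpha> a A B t / A) powr \<alpha>)
      = A * B * (- 1 / \<alpha> * Y t powr (- 1 / \<alpha>) * r)"
    using \<alpha> by (simp add: bernoulli_path_eq r_def)
  then show ?thesis
    using deriv by simp
qed

lemma bernoulli_path_tendsto: "(bernoulli_path \<alpha> a A B \<longlongrightarrow> A) at_top"
proof -
  have "(Y \<longlongrightarrow> (A powr \<alpha> - B powr \<alpha>) * 0 + B powr \<alpha>) at_top"
    unfolding Y_def[abs_def] using a
    by (intro tendsto_intros tendsto_exp_neg_at_top) simp
  then have "((\<lambda>t. A * B * Y t powr (- 1 / \<alpha>)) \<longlongrightarrow> A * B * (B powr \<alpha>) powr (- 1 / \<alpha>)) at_top"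
    using B by (intro tendsto_intros) simp_all
  moreover have "A * B * (B powr \<alpha>) powr (- 1 / \<alpha>) = A"
    using B \<alpha> by (simp add: powr_powr powr_minus_divide)
  ultimately show ?thesis
    unfolding bernoulli_path_eq[abs_def] by (simp only:)
qed

end

text \<open>The hypotheses of the theorem that the proof needs, with \<theta> > 0 in place of the inequality
  it abbreviates.\<close>

locale lucas_uzawa_solution =
  fixes \<rho> \<pi>d \<gamma> \<delta> \<beta> \<sigma> c\<^sub>1 z\<^sub>0 c\<^sub>0 k\<^sub>0 h\<^sub>0 u\<^sub>0 :: real
    and z F c k h u lam mu :: "real \<Rightarrow> real"
    and zs \<theta> K :: real
  assumes \<pi>_pos: "\<pi>d > 0" and \<gamma>_pos: "\<gamma> > 0" and \<delta>_pos: "\<delta> > 0"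
    and \<beta>_pos: "0 < \<beta>" and \<beta>_less_1: "\<beta> < 1"
    and \<sigma>_pos: "\<sigma> > 0"
    and \<delta>_less: "\<delta> < \<rho> + \<delta> * \<sigma>"
    and zs_def: "zs = (\<beta> * \<gamma> / (\<delta> + \<pi>d)) powr (1 / (\<beta> - 1))"
    and \<theta>_pos: "\<theta> > 0"
    and theta_def: "\<theta> = (\<delta> + \<pi>d - \<pi>d * \<beta>) / \<beta> - (\<delta> - \<rho>) / \<sigma>"
    and c1_pos: "c\<^sub>1 > 0"
    and z0_pos: "z\<^sub>0 > 0"
    and c0_pos: "c\<^sub>0 > 0" and k0_pos: "k\<^sub>0 > 0" and h0_pos: "h\<^sub>0 > 0" and u0_pos: "u\<^sub>0 > 0"
    and u0_def: "u\<^sub>0 = z\<^sub>0 * k\<^sub>0 / h\<^sub>0"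
    and z_def: "z = (\<lambda>t. zs * z\<^sub>0 /
        ((zs powr (1 - \<beta>) - z\<^sub>0 powr (1 - \<beta>))
           * exp (- ((1 - \<beta>) * (\<delta> + \<pi>d) / \<beta>) * t) + z\<^sub>0 powr (1 - \<beta>))
          powr (1 / (1 - \<beta>)))"
    and F_def: "F = (\<lambda>t. integral {0..t} (\<lambda>s. z s powr ((\<sigma> - \<beta>) / \<sigma>) * exp (- \<theta> * s)))"
    and K_def: "K = k\<^sub>0 / (c\<^sub>0 * z\<^sub>0 powr ((\<beta> - \<sigma>) / \<sigma>))"
    and c0_normalization: "c\<^sub>0 * z\<^sub>0 powr (\<beta> / \<sigma>) = (c\<^sub>1 * \<delta> / ((1 - \<beta>) * \<gamma>)) powr (- 1 / \<sigma>)"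
    and F_tendsto_K: "(F \<longlongrightarrow> K) at_top"
    and u0_normalization: "\<gamma> * (1 - \<beta>) * (\<rho> - \<delta> + \<delta> * \<sigma>) / \<delta> =
        u\<^sub>0 / k\<^sub>0 * (\<sigma> * c\<^sub>0 * z\<^sub>0 powr (\<beta> - 1) - (\<rho> + \<pi>d - \<pi>d * \<sigma>) * k\<^sub>0 * z\<^sub>0 powr (\<beta> - 1)
                    + \<beta> * \<gamma> * (1 - \<sigma>) * k\<^sub>0)"
    and c_def: "c = (\<lambda>t. c\<^sub>0 * z\<^sub>0 powr (\<beta> / \<sigma>) * exp (- ((\<rho> - \<delta>) / \<sigma>) * t) * z t powr (- \<beta> / \<sigma>))"
    and k_def: "k = (\<lambda>t. (K - F t) * c\<^sub>0 * z\<^sub>0 powr (\<beta> / \<sigma>) * z t powr (-1)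
                    * exp ((\<delta> + \<pi>d - \<pi>d * \<beta>) / \<beta> * t))"
    and h_def: "h = (\<lambda>t. h\<^sub>0 *
        (\<sigma> * c\<^sub>0 * z\<^sub>0 powr (\<beta> / \<sigma>) * exp (- ((\<rho> - \<delta>) / \<sigma>) * t) * z t powr (\<beta> - \<beta> / \<sigma>)
         + (\<beta> * \<gamma> * (1 - \<sigma>) - (\<rho> + \<pi>d - \<pi>d * \<sigma>) * z t powr (\<beta> - 1))
           * (K - F t) * c\<^sub>0 * z\<^sub>0 powr (\<beta> / \<sigma>) * exp ((\<delta> + \<pi>d - \<pi>d * \<beta>) / \<beta> * t))
        / (z\<^sub>0 * (\<sigma> * c\<^sub>0 * z\<^sub>0 powr (\<beta> - 1) - (\<rho> + \<pi>d - \<pi>d * \<sigma>) * k\<^sub>0 * z\<^sub>0 powr (\<beta> - 1)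
                    + \<beta> * \<gamma> * (1 - \<sigma>) * k\<^sub>0)))"
    and u_def: "u = (\<lambda>t. u\<^sub>0 / k\<^sub>0 *
        (\<sigma> * c\<^sub>0 * z\<^sub>0 powr (\<beta> - 1) - (\<rho> + \<pi>d - \<pi>d * \<sigma>) * k\<^sub>0 * z\<^sub>0 powr (\<beta> - 1)
          + \<beta> * \<gamma> * (1 - \<sigma>) * k\<^sub>0)
        * ((K - F t) /
           ((\<beta> * \<gamma> * (1 - \<sigma>) - (\<rho> + \<pi>d - \<pi>d * \<sigma>) * z t powr (\<beta> - 1)) * (K - F t)
            + \<sigma> * z t powr (\<beta> - \<beta> / \<sigma>) * exp (- \<theta> * t))))"
    and lam_def: "lam = (\<lambda>t. c\<^sub>1 * \<delta> / ((1 - \<beta>) * \<gamma>) * exp ((\<rho> - \<delta>) * t) * z t powr \<beta>)"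
    and mu_def: "mu = (\<lambda>t. c\<^sub>1 * exp ((\<rho> - \<delta>) * t))"
begin

lemma zs_pos: "zs > 0"
  using \<beta>_pos \<gamma>_pos \<delta>_pos \<pi>_pos by (simp add: zs_def)

lemma zs_powr: "zs powr (1 - \<beta>) = (\<delta> + \<pi>d) / (\<beta> * \<gamma>)"
proof -
  have "zs powr (1 - \<beta>) = (\<beta> * \<gamma> / (\<delta> + \<pi>d)) powr (1 / (\<beta> - 1) * (1 - \<beta>))"
    by (simp add: zs_def powr_powr)
  also have "1 / (\<beta> - 1) * (1 - \<beta>) = - 1"
    using \<beta>_less_1 by (simp add: field_simps)
  finally show ?thesis
    using \<beta>_pos \<gamma>_pos \<delta>_pos \<pi>_pos by (simp add: powr_neg_one)
qed

lemma z_eq_bernoulli_path: "z = bernoulli_path (1 - \<beta>) ((1 - \<beta>) * (\<delta> + \<pi>d) / \<beta>) zs z\<^sub>0"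
  by (simp add: z_def bernoulli_path_def[abs_def])

lemma z_pos: "t \<ge> 0 \<Longrightarrow> z t > 0"
  unfolding z_eq_bernoulli_path
  using \<beta>_pos \<beta>_less_1 \<delta>_pos \<pi>_pos zs_pos z0_pos by (intro bernoulli_path_pos) auto

lemma z_0: "z 0 = z\<^sub>0"
  unfolding z_eq_bernoulli_path
  using \<beta>_pos \<beta>_less_1 \<delta>_pos \<pi>_pos zs_pos z0_pos by (intro bernoulli_path_0) auto

lemma z_powr_has_real_derivative:
  assumes "t \<ge> 0"
  shows "((\<lambda>s. z s powr p) has_real_derivative
           p * z t powr p * ((\<delta> + \<pi>d) / \<beta> - \<gamma> * z t powr (1 - \<beta>))) (at t within S)"
proof (rule has_real_derivative_powr_of_growth[where f = z, OF _ z_pos[OF assms]])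
  have "(z t / zs) powr (1 - \<beta>) = \<beta> * \<gamma> / (\<delta> + \<pi>d) * z t powr (1 - \<beta>)"
    using zs_pos z_pos[OF assms] \<beta>_pos \<gamma>_pos \<delta>_pos \<pi>_pos by (simp add: powr_divide zs_powr)
  then have "(1 - \<beta>) * (\<delta> + \<pi>d) / \<beta> / (1 - \<beta>) * (1 - (z t / zs) powr (1 - \<beta>))
      = (\<delta> + \<pi>d) / \<beta> * (1 - \<beta> * \<gamma> / (\<delta> + \<pi>d) * z t powr (1 - \<beta>))"
    using \<beta>_less_1 by simp
  also have "\<dots> = (\<delta> + \<pi>d) / \<beta> - \<gamma> * z t powr (1 - \<beta>)"
    using \<beta>_pos \<delta>_pos \<pi>_pos by (simp add: right_diff_distrib add_pos_pos less_imp_neq[symmetric])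
  finally have rate: "(1 - \<beta>) * (\<delta> + \<pi>d) / \<beta> / (1 - \<beta>) * (1 - (z t / zs) powr (1 - \<beta>))
      = (\<delta> + \<pi>d) / \<beta> - \<gamma> * z t powr (1 - \<beta>)" .
  have "(z has_real_derivative z t * ((1 - \<beta>) * (\<delta> + \<pi>d) / \<beta> / (1 - \<beta>))
      * (1 - (z t / zs) powr (1 - \<beta>))) (at t within S)"
    unfolding z_eq_bernoulli_path using assms \<beta>_pos \<beta>_less_1 \<delta>_pos \<pi>_pos zs_pos z0_pos
    by (intro bernoulli_path_has_real_derivative) auto
  then show "(z has_real_derivative z t * ((\<delta> + \<pi>d) / \<beta> - \<gamma> * z t powr (1 - \<beta>))) (at t within S)"
    by (simp only: mult.assoc rate)
qed

lemma z_tendsto: "(z \<longlongrightarrow> zs) at_top"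
  unfolding z_eq_bernoulli_path using \<beta>_pos \<beta>_less_1 \<delta>_pos \<pi>_pos zs_pos z0_pos
  by (intro bernoulli_path_tendsto) auto

lemma z_powr_tendsto: "((\<lambda>t. z t powr p) \<longlongrightarrow> zs powr p) at_top"
  using zs_pos by (intro tendsto_intros z_tendsto) auto

lemma Bfun_z_powr: "Bfun (\<lambda>t. z t powr p) at_top"
  by (rule Bfun_tendsto[OF z_powr_tendsto])

lemma z_powr_pos: "t \<ge> 0 \<Longrightarrow> z t powr p > 0"
  using z_pos[of t] by simp

lemma z_powr_continuous: "continuous_on {0..} (\<lambda>s. z s powr p)"
  by (rule continuous_on_atLeast_of_derivative[OF z_powr_has_real_derivative])

lemma integrand_continuous: "continuous_on {0..} (\<lambda>s. z s powr ((\<sigma> - \<beta>) / \<sigma>) * exp (- \<theta> * s))"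
  by (intro continuous_intros z_powr_continuous)

lemma F_has_real_derivative:
  "t \<ge> 0 \<Longrightarrow> (F has_real_derivative z t powr ((\<sigma> - \<beta>) / \<sigma>) * exp (- \<theta> * t)) (at t within {0..})"
  unfolding F_def by (rule integral_has_real_derivative_atLeast[OF integrand_continuous])

lemma F_less_K: "t \<ge> 0 \<Longrightarrow> F t < K"
  unfolding F_def using F_tendsto_K z_powr_pos
  by (intro integral_less_tendsto[OF integrand_continuous]) (auto simp: F_def)

lemma Bfun_K_minus_F: "Bfun (\<lambda>t. (K - F t) * exp (\<theta> * t)) at_top"
proof -
  obtain M where "\<forall>\<^sub>F t in at_top. norm (z t powr ((\<sigma> - \<beta>) / \<sigma>)) \<le> M"
    using Bfun_z_powr by (blast elim: BfunE)
  then obtain T0 where T0: "\<And>t. t \<ge> T0 \<Longrightarrow> z t powr ((\<sigma> - \<beta>) / \<sigma>) \<le> M"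
    unfolding eventually_at_top_linorder by auto
  define T where "T = max T0 0"
  have T: "T \<ge> 0" and bound: "\<And>t. t \<ge> T \<Longrightarrow> z t powr ((\<sigma> - \<beta>) / \<sigma>) \<le> M"
    using T0 by (auto simp: T_def)
  have "\<forall>\<^sub>F t in at_top. norm ((K - F t) * exp (\<theta> * t)) \<le> M / \<theta>"
    unfolding eventually_at_top_linorder
  proof (intro exI allI impI)
    fix t assume "t \<ge> T"
    have "K - F t \<le> M / \<theta> * exp (- \<theta> * t)"
      unfolding F_def using \<theta>_pos F_tendsto_K T \<open>t \<ge> T\<close>
      by (intro integral_tail_le_exp[OF integrand_continuous]) (auto simp: F_def bound mult_right_mono)
    then have "(K - F t) * exp (\<theta> * t) \<le> M / \<theta> * exp (- \<theta> * t) * exp (\<theta> * t)"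
      by (rule mult_right_mono) simp
    then have "(K - F t) * exp (\<theta> * t) \<le> M / \<theta>"
      by (simp add: mult.assoc exp_add[symmetric])
    moreover have "F t < K"
      using F_less_K T \<open>t \<ge> T\<close> by simp
    ultimately show "norm ((K - F t) * exp (\<theta> * t)) \<le> M / \<theta>"
      by simp
  qed
  then show ?thesis
    by (rule BfunI)
qed

definition \<eta> :: real where "\<eta> = (\<delta> + \<pi>d - \<pi>d * \<beta>) / \<beta>"
definition C :: real where "C = c\<^sub>0 * z\<^sub>0 powr (\<beta> / \<sigma>)"
definition D :: real where
  "D = \<sigma> * c\<^sub>0 * z\<^sub>0 powr (\<beta> - 1) - (\<rho> + \<pi>d - \<pi>d * \<sigma>) * k\<^sub>0 * z\<^sub>0 powr (\<beta> - 1)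
         + \<beta> * \<gamma> * (1 - \<sigma>) * k\<^sub>0"
definition G :: real where "G = \<gamma> * (1 - \<beta>) * (\<rho> - \<delta> + \<delta> * \<sigma>)"
definition B :: "real \<Rightarrow> real" where
  "B t = \<beta> * \<gamma> * (1 - \<sigma>) - (\<rho> + \<pi>d - \<pi>d * \<sigma>) * z t powr (\<beta> - 1)"
definition N :: "real \<Rightarrow> real" where
  "N t = \<sigma> * C * exp (- ((\<rho> - \<delta>) / \<sigma>) * t) * z t powr (\<beta> - \<beta> / \<sigma>)
         + B t * (K - F t) * C * exp (\<eta> * t)"

lemma exp_consumption_split: "exp (- ((\<rho> - \<delta>) / \<sigma>) * t) = exp (\<eta> * t) * exp (- \<theta> * t)"
proof -
  have "\<eta> * t + - \<theta> * t = - ((\<rho> - \<delta>) / \<sigma>) * t"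
    using \<sigma>_pos by (simp add: theta_def \<eta>_def field_simps)
  then show ?thesis
    by (simp add: exp_add[symmetric])
qed

lemma C_pos: "C > 0"
  using c0_pos z0_pos by (simp add: C_def)

lemma G_pos: "G > 0"
  using \<gamma>_pos \<beta>_less_1 \<delta>_less by (simp add: G_def)

lemma D_normalization: "u\<^sub>0 / k\<^sub>0 * D = G / \<delta>"
  using u0_normalization by (simp add: D_def G_def)

lemma D_pos: "D > 0"
proof -
  have "u\<^sub>0 / k\<^sub>0 * D > 0"
    unfolding D_normalization using G_pos \<delta>_pos by simp
  then show ?thesis
    using u0_pos k0_pos by (auto simp: zero_less_divide_iff zero_less_mult_iff)
qed

lemma N_has_real_derivative:
  assumes t: "t \<ge> 0"
  shows "(N has_real_derivative \<delta> * N t - G * (K - F t) * C * exp (\<eta> * t)) (at t within {0..})"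
proof -
  have exp_deriv: "((\<lambda>s. exp (a * s)) has_real_derivative exp (a * t) * a) (at t within {0..})" for a
    by (auto intro!: derivative_eq_intros)
  note d1 = DERIV_mult[OF DERIV_cmult[OF exp_deriv[of "- ((\<rho> - \<delta>) / \<sigma>)"], of "\<sigma> * C"]
      z_powr_has_real_derivative[OF t, of "\<beta> - \<beta> / \<sigma>"]]
  note dB = DERIV_diff[OF DERIV_const[of "\<beta> * \<gamma> * (1 - \<sigma>)"]
      DERIV_cmult[OF z_powr_has_real_derivative[OF t, of "\<beta> - 1"], of "\<rho> + \<pi>d - \<pi>d * \<sigma>"]]
  note dP = DERIV_diff[OF DERIV_const[of K] F_has_real_derivative[OF t]]
  note d2 = DERIV_mult[OF DERIV_cmult_right[OF DERIV_mult[OF dB dP], of C] exp_deriv[of \<eta>]]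
  define Z where "Z = z t"
  define Zb where "Zb = z t powr \<beta>"
  define Zs where "Zs = z t powr (- \<beta> / \<sigma>)"
  have Z_pos: "Z > 0" "Zb > 0"
    using z_pos[OF t] by (auto simp: Z_def Zb_def)
  have powers: "z t powr (\<beta> - \<beta> / \<sigma>) = Zb * Zs" "z t powr (\<beta> - 1) = Zb / Z"
      "z t powr ((\<sigma> - \<beta>) / \<sigma>) = Z * Zs" "z t powr (1 - \<beta>) = Z / Zb"
  proof -
    have "(\<sigma> - \<beta>) / \<sigma> = 1 + - \<beta> / \<sigma>"
      using \<sigma>_pos by (simp add: field_simps)
    then show "z t powr ((\<sigma> - \<beta>) / \<sigma>) = Z * Zs"
      using z_pos[OF t] by (simp add: Z_def Zs_def powr_diff powr_minus_divide)
  qed (use z_pos[OF t] in \<open>simp_all add: Z_def Zb_def Zs_def powr_diff powr_add[symmetric]\<close>)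
  show ?thesis
    unfolding N_def B_def
    apply (rule DERIV_cong[OF DERIV_add[OF d1 d2]])
    unfolding powers exp_consumption_split \<eta>_def G_def
    using Z_pos \<beta>_pos \<sigma>_pos by (simp add: field_simps)
qed

lemma discounted_N_eq:
  "exp (- \<delta> * t) * N t
     = (\<sigma> * C * z t powr (\<beta> - \<beta> / \<sigma>) + B t * ((K - F t) * exp (\<theta> * t)) * C)
       * exp (((\<delta> - \<rho>) / \<sigma> - \<delta>) * t)"
proof -
  have e1: "exp (- \<delta> * t) * exp (- ((\<rho> - \<delta>) / \<sigma>) * t) = exp (((\<delta> - \<rho>) / \<sigma> - \<delta>) * t)"
    using \<sigma>_pos by (simp add: exp_add[symmetric] field_simps)
  have e2: "exp (- \<delta> * t) * exp (\<eta> * t) = exp (\<theta> * t) * exp (((\<delta> - \<rho>) / \<sigma> - \<delta>) * t)"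
    using \<sigma>_pos \<beta>_pos by (simp add: exp_add[symmetric] theta_def \<eta>_def field_simps)
  have "exp (- \<delta> * t) * N t
      = \<sigma> * C * z t powr (\<beta> - \<beta> / \<sigma>) * (exp (- \<delta> * t) * exp (- ((\<rho> - \<delta>) / \<sigma>) * t))
        + B t * (K - F t) * C * (exp (- \<delta> * t) * exp (\<eta> * t))"
    by (simp add: N_def algebra_simps)
  then show ?thesis
    unfolding e1 e2 by (simp add: algebra_simps)
qed

lemma exp_decay_tendsto_0: "((\<lambda>t. exp (((\<delta> - \<rho>) / \<sigma> - \<delta>) * t)) \<longlongrightarrow> 0) at_top"
  using \<delta>_less \<sigma>_pos by (intro tendsto_exp_neg_at_top) (simp add: field_simps)

lemma discounted_N_tendsto_0: "((\<lambda>t. exp (- \<delta> * t) * N t) \<longlongrightarrow> 0) at_top"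
proof -
  have "(B \<longlongrightarrow> \<beta> * \<gamma> * (1 - \<sigma>) - (\<rho> + \<pi>d - \<pi>d * \<sigma>) * zs powr (\<beta> - 1)) at_top"
    unfolding B_def[abs_def] by (intro tendsto_intros z_powr_tendsto)
  then have "Bfun B at_top"
    by (rule Bfun_tendsto)
  then have "Bfun (\<lambda>t. \<sigma> * C * z t powr (\<beta> - \<beta> / \<sigma>) + B t * ((K - F t) * exp (\<theta> * t)) * C) at_top"
    by (intro Bfun_add Bfun_mult Bfun_z_powr Bfun_K_minus_F Bfun_const)
  then show ?thesis
    unfolding discounted_N_eq by (rule Bfun_mult_tendsto_zero[OF _ exp_decay_tendsto_0])
qed

lemma N_pos:
  assumes "t \<ge> 0"
  shows "N t > 0"
proof -
  have "0 < exp (- \<delta> * t) * N t"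
  proof (rule DERIV_neg_tendsto_imp_gt[where f = "\<lambda>t. exp (- \<delta> * t) * N t"
        and f' = "\<lambda>t. - G * (K - F t) * C * exp (\<eta> * t) * exp (- \<delta> * t)"])
    show "((\<lambda>t. exp (- \<delta> * t) * N t) has_real_derivative
        - G * (K - F x) * C * exp (\<eta> * x) * exp (- \<delta> * x)) (at x within {0..})" if "x \<ge> 0" for x
      using N_has_real_derivative[OF that]
      by (auto intro!: derivative_eq_intros simp: algebra_simps)
    show "- G * (K - F x) * C * exp (\<eta> * x) * exp (- \<delta> * x) < 0" if "x > 0" for x
      using G_pos C_pos F_less_K[of x] that by simp
  qed (use discounted_N_tendsto_0 assms in auto)
  then show ?thesis
    by (simp add: zero_less_mult_iff)
qed

lemma h_eq: "h t = h\<^sub>0 * N t / (z\<^sub>0 * D)"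
  by (simp add: h_def N_def B_def C_def D_def \<eta>_def algebra_simps)

lemma k_eq: "t \<ge> 0 \<Longrightarrow> k t = (K - F t) * C * exp (\<eta> * t) / z t"
  using z_pos[of t] by (simp add: k_def C_def \<eta>_def powr_neg_one)

lemma u_eq: "u t = u\<^sub>0 / k\<^sub>0 * D * (K - F t) * C * exp (\<eta> * t) / N t"
proof -
  define den where "den = B t * (K - F t) + \<sigma> * z t powr (\<beta> - \<beta> / \<sigma>) * exp (- \<theta> * t)"
  have N_den: "N t = den * (C * exp (\<eta> * t))"
    unfolding N_def den_def exp_consumption_split by (simp add: algebra_simps)
  have "u t = u\<^sub>0 / k\<^sub>0 * D * ((K - F t) / den)"
    by (simp add: u_def D_def B_def den_def)
  then show ?thesis
    unfolding N_den using C_pos by simp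
qed

lemma u_mult_h: "t \<ge> 0 \<Longrightarrow> u t * h t = (K - F t) * C * exp (\<eta> * t)"
  using N_pos[of t] D_pos z0_pos k0_pos h0_pos
  by (simp add: u_eq h_eq u0_def field_simps)

lemma k_pos: "t \<ge> 0 \<Longrightarrow> k t > 0"
  using F_less_K[of t] C_pos z_pos[of t] by (simp add: k_eq)

lemma h_pos: "t \<ge> 0 \<Longrightarrow> h t > 0"
  using N_pos[of t] D_pos z0_pos h0_pos by (simp add: h_eq)

lemma u_pos: "t \<ge> 0 \<Longrightarrow> u t > 0"
  using N_pos[of t] D_pos C_pos F_less_K[of t] u0_pos k0_pos by (simp add: u_eq)

lemma z_eq_h_u_div_k: "t \<ge> 0 \<Longrightarrow> z t = h t * u t / k t"
  using u_mult_h[of t] k_eq[of t] F_less_K[of t] C_pos z_pos[of t] by (simp add: mult.commute)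

lemma u_h_powr: "t \<ge> 0 \<Longrightarrow> u t powr (1 - \<beta>) * h t powr (1 - \<beta>) = z t powr (1 - \<beta>) * k t powr (1 - \<beta>)"
  using z_eq_h_u_div_k[of t] u_pos[of t] h_pos[of t] k_pos[of t] z_pos[of t]
  by (simp add: powr_mult[symmetric] mult.commute)

lemma z_powr_expand:
  assumes "t \<ge> 0"
  shows "z t powr (\<beta> - 1) = z t powr \<beta> / z t"
    and "z t powr ((\<sigma> - \<beta>) / \<sigma>) = z t * z t powr (- \<beta> / \<sigma>)"
    and "z t powr (1 - \<beta>) = z t / z t powr \<beta>"
    and "z t powr (- 1) = 1 / z t"
proof -
  have "(\<sigma> - \<beta>) / \<sigma> = 1 - \<beta> / \<sigma>"
    using \<sigma>_pos by (simp add: field_simps)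
  then show "z t powr ((\<sigma> - \<beta>) / \<sigma>) = z t * z t powr (- \<beta> / \<sigma>)"
    using z_pos[OF assms] by (simp add: powr_diff powr_minus_divide)
qed (use z_pos[OF assms] in \<open>simp_all add: powr_diff powr_neg_one\<close>)

lemma production_eq:
  assumes "t \<ge> 0"
  shows "k t powr \<beta> * u t powr (1 - \<beta>) * h t powr (1 - \<beta>) = k t * z t powr (1 - \<beta>)"
proof -
  have "k t powr \<beta> * u t powr (1 - \<beta>) * h t powr (1 - \<beta>)
      = k t powr \<beta> * (u t powr (1 - \<beta>) * h t powr (1 - \<beta>))"
    by (simp only: ac_simps)
  also have "\<dots> = z t powr (1 - \<beta>) * (k t powr \<beta> * k t powr (1 - \<beta>))"
    unfolding u_h_powr[OF assms] by (simp only: ac_simps)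
  also have "k t powr \<beta> * k t powr (1 - \<beta>) = k t"
    using k_pos[OF assms] by (simp add: powr_add[symmetric])
  finally show ?thesis
    by (simp only: ac_simps)
qed

lemma marginal_product_eq:
  assumes "t \<ge> 0"
  shows "u t powr (1 - \<beta>) * k t powr (\<beta> - 1) * h t powr (1 - \<beta>) = z t powr (1 - \<beta>)"
proof -
  have "u t powr (1 - \<beta>) * k t powr (\<beta> - 1) * h t powr (1 - \<beta>)
      = (u t powr (1 - \<beta>) * h t powr (1 - \<beta>)) * k t powr (\<beta> - 1)"
    by (simp only: ac_simps)
  also have "\<dots> = z t powr (1 - \<beta>) * (k t powr (1 - \<beta>) * k t powr (\<beta> - 1))"
    unfolding u_h_powr[OF assms] by (simp only: ac_simps)
  also have "k t powr (1 - \<beta>) * k t powr (\<beta> - 1) = 1"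
    using k_pos[OF assms] by (simp add: powr_add[symmetric])
  finally show ?thesis
    by simp
qed

lemma consumption_eq_costate: "lam t = c t powr (- \<sigma>)"
proof -
  have "C = (c\<^sub>1 * \<delta> / ((1 - \<beta>) * \<gamma>)) powr (- 1 / \<sigma>)"
    using c0_normalization by (simp add: C_def)
  then have C_powr: "C powr (- \<sigma>) = c\<^sub>1 * \<delta> / ((1 - \<beta>) * \<gamma>)"
    using c1_pos \<delta>_pos \<beta>_less_1 \<gamma>_pos \<sigma>_pos by (simp add: powr_powr)
  have c_eq: "c t = C * exp (- ((\<rho> - \<delta>) / \<sigma>) * t) * z t powr (- \<beta> / \<sigma>)"
    by (simp add: c_def C_def)
  have "(- ((\<rho> - \<delta>) / \<sigma>) * t) * (- \<sigma>) = (\<rho> - \<delta>) * t" "- \<beta> / \<sigma> * - \<sigma> = \<beta>"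
    using \<sigma>_pos by (simp_all add: field_simps)
  then show ?thesis
    unfolding c_eq powr_mult exp_powr_real powr_powr C_powr lam_def by simp
qed

lemma static_condition:
  assumes "t \<ge> 0"
  shows "u t powr \<beta> = \<gamma> * (1 - \<beta>) * k t powr \<beta> * h t powr (- \<beta>) / \<delta> * (lam t / mu t)"
proof -
  have "u t = z t * k t / h t"
    using z_eq_h_u_div_k[OF assms] h_pos[OF assms] k_pos[OF assms] by (simp add: field_simps)
  then have "u t powr \<beta> = z t powr \<beta> * k t powr \<beta> / h t powr \<beta>"
    using z_pos[OF assms] h_pos[OF assms] k_pos[OF assms] by (simp add: powr_mult powr_divide)
  moreover have "z t powr \<beta> = \<gamma> * (1 - \<beta>) / \<delta> * (lam t / mu t)"
    using c1_pos \<delta>_pos \<beta>_less_1 \<gamma>_pos by (simp add: lam_def mu_def)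
  ultimately show ?thesis
    by (simp add: powr_minus_divide mult_ac)
qed

lemma k_has_real_derivative:
  assumes t: "t \<ge> 0"
  shows "(k has_real_derivative \<gamma> * k t powr \<beta> * u t powr (1 - \<beta>) * h t powr (1 - \<beta>) - \<pi>d * k t - c t)
           (at t within {0..})"
proof -
  have k_fun: "k = (\<lambda>s. (K - F s) * C * exp (\<eta> * s) * z s powr (- 1))"
    by (auto simp: k_def C_def \<eta>_def)
  have "((\<lambda>s. exp (\<eta> * s)) has_real_derivative exp (\<eta> * t) * \<eta>) (at t within {0..})"
    by (auto intro!: derivative_eq_intros)
  note dk = DERIV_mult[OF DERIV_mult[OF DERIV_cmult_right[OF DERIV_diff[OF DERIV_const[of K]
      F_has_real_derivative[OF t]], of C] this] z_powr_has_real_derivative[OF t, of "- 1"]]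
  have "\<gamma> * k t powr \<beta> * u t powr (1 - \<beta>) * h t powr (1 - \<beta>) = \<gamma> * (k t * z t powr (1 - \<beta>))"
    using production_eq[OF t] by (simp add: mult.assoc)
  then have rhs: "\<gamma> * k t powr \<beta> * u t powr (1 - \<beta>) * h t powr (1 - \<beta>) - \<pi>d * k t - c t
      = \<gamma> * ((K - F t) * C * exp (\<eta> * t) / z t) * z t powr (1 - \<beta>) - \<pi>d * ((K - F t) * C * exp (\<eta> * t) / z t)
        - C * exp (- ((\<rho> - \<delta>) / \<sigma>) * t) * z t powr (- \<beta> / \<sigma>)" (is "_ = ?rate")
    using k_eq[OF t] by (simp add: c_def C_def)
  have "((\<lambda>s. (K - F s) * C * exp (\<eta> * s) * z s powr (- 1)) has_real_derivative ?rate) (at t within {0..})"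
    apply (rule DERIV_cong[OF dk])
    unfolding z_powr_expand[OF t] exp_consumption_split \<eta>_def
    using z_pos[OF t] \<beta>_pos \<sigma>_pos by (simp add: field_simps)
  then show ?thesis
    unfolding rhs k_fun[symmetric] .
qed

lemma h0_G_div: "h\<^sub>0 * G / (z\<^sub>0 * D) = \<delta>"
proof -
  have "G = \<delta> * (u\<^sub>0 / k\<^sub>0 * D)"
    unfolding D_normalization using \<delta>_pos by simp
  then show ?thesis
    using D_pos z0_pos k0_pos h0_pos by (simp add: u0_def field_simps)
qed

lemma h_has_real_derivative:
  assumes t: "t \<ge> 0"
  shows "(h has_real_derivative \<delta> * (1 - u t) * h t) (at t within {0..})"
proof -
  have "h = (\<lambda>s. h\<^sub>0 * N s / (z\<^sub>0 * D))"
    by (simp add: h_eq[abs_def])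
  moreover have "((\<lambda>s. h\<^sub>0 * N s / (z\<^sub>0 * D)) has_real_derivative
      h\<^sub>0 * (\<delta> * N t - G * (K - F t) * C * exp (\<eta> * t)) / (z\<^sub>0 * D)) (at t within {0..})"
    by (intro DERIV_cdivide DERIV_cmult N_has_real_derivative[OF t])
  ultimately have "(h has_real_derivative h\<^sub>0 * (\<delta> * N t - G * (K - F t) * C * exp (\<eta> * t)) / (z\<^sub>0 * D))
      (at t within {0..})"
    by simp
  moreover have "h\<^sub>0 * (\<delta> * N t - G * (K - F t) * C * exp (\<eta> * t)) / (z\<^sub>0 * D)
      = \<delta> * (h\<^sub>0 * N t / (z\<^sub>0 * D)) - h\<^sub>0 * G / (z\<^sub>0 * D) * ((K - F t) * C * exp (\<eta> * t))"
    by (simp add: algebra_simps diff_divide_distrib add_divide_distrib)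
  moreover have "\<dots> = \<delta> * (1 - u t) * h t"
    unfolding h0_G_div u_mult_h[OF t, symmetric] h_eq[symmetric] by (simp add: algebra_simps)
  ultimately show ?thesis
    by simp
qed

lemma lam_has_real_derivative:
  assumes t: "t \<ge> 0"
  shows "(lam has_real_derivative
           - lam t * \<gamma> * \<beta> * u t powr (1 - \<beta>) * k t powr (\<beta> - 1) * h t powr (1 - \<beta>)
           + lam t * (\<rho> + \<pi>d)) (at t within {0..})"
proof -
  have exp_deriv: "((\<lambda>s. exp ((\<rho> - \<delta>) * s)) has_real_derivative exp ((\<rho> - \<delta>) * t) * (\<rho> - \<delta>))
      (at t within {0..})"
    by (auto intro!: derivative_eq_intros)
  have "((\<lambda>s. exp ((\<rho> - \<delta>) * s) * z s powr \<beta>) has_real_derivative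
      exp ((\<rho> - \<delta>) * t) * z t powr \<beta> * (\<rho> + \<pi>d - \<beta> * \<gamma> * z t powr (1 - \<beta>))) (at t within {0..})"
    by (rule DERIV_cong[OF DERIV_mult[OF exp_deriv z_powr_has_real_derivative[OF t]]])
      (use \<beta>_pos in \<open>simp add: field_simps\<close>)
  then have "(lam has_real_derivative lam t * (\<rho> + \<pi>d - \<beta> * \<gamma> * z t powr (1 - \<beta>))) (at t within {0..})"
    unfolding lam_def mult.assoc[of "c\<^sub>1 * \<delta> / ((1 - \<beta>) * \<gamma>)"] by (rule DERIV_cmult)
  moreover have "lam t * (\<rho> + \<pi>d - \<beta> * \<gamma> * z t powr (1 - \<beta>))
      = - lam t * \<gamma> * \<beta> * (u t powr (1 - \<beta>) * k t powr (\<beta> - 1) * h t powr (1 - \<beta>))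
        + lam t * (\<rho> + \<pi>d)"
    unfolding marginal_product_eq[OF t] by (simp add: algebra_simps)
  ultimately show ?thesis
    by (simp add: mult.assoc)
qed

lemma mu_has_real_derivative: "(mu has_real_derivative mu t * (\<rho> - \<delta>)) (at t within S)"
  unfolding mu_def by (auto intro!: derivative_eq_intros)

lemma K_mult_C: "K * C = k\<^sub>0 * z\<^sub>0"
proof -
  have "(\<beta> - \<sigma>) / \<sigma> = \<beta> / \<sigma> - 1"
    using \<sigma>_pos by (simp add: field_simps)
  then have "z\<^sub>0 powr ((\<beta> - \<sigma>) / \<sigma>) = z\<^sub>0 powr (\<beta> / \<sigma>) / z\<^sub>0"
    using z0_pos by (simp add: powr_diff)
  then show ?thesis
    using z0_pos c0_pos by (simp add: K_def C_def)
qed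

lemma F_0: "F 0 = 0"
  by (simp add: F_def)

lemma N_0: "N 0 = z\<^sub>0 * D"
proof -
  have "z\<^sub>0 powr (\<beta> - \<beta> / \<sigma>) = z\<^sub>0 powr \<beta> / z\<^sub>0 powr (\<beta> / \<sigma>)"
    "z\<^sub>0 powr (\<beta> - 1) = z\<^sub>0 powr \<beta> / z\<^sub>0"
    using z0_pos by (simp_all add: powr_diff)
  moreover have "N 0 = \<sigma> * C * z\<^sub>0 powr (\<beta> - \<beta> / \<sigma>) + B 0 * (K * C)"
    unfolding N_def F_0 z_0 by simp
  ultimately show ?thesis
    unfolding K_mult_C using z0_pos by (simp add: B_def z_0 D_def C_def field_simps)
qed

lemma initial_values: "c 0 = c\<^sub>0" "k 0 = k\<^sub>0" "h 0 = h\<^sub>0" "u 0 = u\<^sub>0"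
proof -
  show "c 0 = c\<^sub>0"
    using z0_pos by (simp add: c_def z_0 mult.assoc powr_add[symmetric])
  show "k 0 = k\<^sub>0"
    using k_eq[of 0] K_mult_C z0_pos by (simp add: F_0 z_0)
  show "h 0 = h\<^sub>0"
    using D_pos z0_pos by (simp add: h_eq N_0)
  show "u 0 = u\<^sub>0"
    using u_eq[of 0] K_mult_C D_pos z0_pos k0_pos by (simp add: F_0 N_0 mult.assoc)
qed

lemma transversality_k: "((\<lambda>t. exp (- \<rho> * t) * lam t * k t) \<longlongrightarrow> 0) at_top"
proof -
  define L where "L = c\<^sub>1 * \<delta> / ((1 - \<beta>) * \<gamma>)"
  have discounted_eq: "exp (- \<rho> * t) * lam t * k t
      = (L * C * (z t powr \<beta> * z t powr (- 1)) * ((K - F t) * exp (\<theta> * t)))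
        * exp (((\<delta> - \<rho>) / \<sigma> - \<delta>) * t)" for t
  proof -
    have "exp (- \<rho> * t) * lam t * k t
        = L * C * (z t powr \<beta> * z t powr (- 1)) * (K - F t)
          * (exp (- \<rho> * t) * exp ((\<rho> - \<delta>) * t) * exp (\<eta> * t))"
      by (simp add: lam_def k_def C_def \<eta>_def L_def ac_simps)
    also have "exp (- \<rho> * t) * exp ((\<rho> - \<delta>) * t) * exp (\<eta> * t)
        = exp (\<theta> * t) * exp (((\<delta> - \<rho>) / \<sigma> - \<delta>) * t)"
      using \<sigma>_pos \<beta>_pos by (simp add: exp_add[symmetric] theta_def \<eta>_def field_simps)
    finally show ?thesis
      by (simp only: ac_simps)
  qed
  have "Bfun (\<lambda>t. L * C * (z t powr \<beta> * z t powr (- 1)) * ((K - F t) * exp (\<theta> * t))) at_top"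
    by (intro Bfun_mult Bfun_const Bfun_z_powr Bfun_K_minus_F)
  then show ?thesis
    unfolding discounted_eq by (rule Bfun_mult_tendsto_zero[OF _ exp_decay_tendsto_0])
qed

lemma transversality_h: "((\<lambda>t. exp (- \<rho> * t) * mu t * h t) \<longlongrightarrow> 0) at_top"
proof -
  have "exp (- \<rho> * t) * exp ((\<rho> - \<delta>) * t) = exp (- \<delta> * t)" for t
    by (simp add: exp_add[symmetric] algebra_simps)
  then have "(\<lambda>t. exp (- \<rho> * t) * mu t * h t) = (\<lambda>t. c\<^sub>1 * h\<^sub>0 / (z\<^sub>0 * D) * (exp (- \<delta> * t) * N t))"
    by (simp add: mu_def h_eq fun_eq_iff)
  then show ?thesis
    by (simp only: tendsto_mult_right_zero[OF discounted_N_tendsto_0])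
qed

end

theorem mainTheorem1:
  fixes \<rho> \<pi>d \<gamma> \<delta> \<beta> \<sigma> c\<^sub>1 z\<^sub>0 c\<^sub>0 k\<^sub>0 h\<^sub>0 u\<^sub>0 :: real
    and z F c k h u lam mu :: "real \<Rightarrow> real"
    and zs \<theta> K :: real
  assumes pos: "\<rho> > 0" "\<pi>d > 0" "\<gamma> > 0" "\<delta> > 0"
    and beta: "0 < \<beta>" "\<beta> < 1"
    and sigma: "\<sigma> > 0" "\<sigma> \<noteq> 1"
    and cond1: "\<rho> < \<delta>" "\<delta> < \<rho> + \<delta> * \<sigma>"
    and cond2: "(\<delta> + \<pi>d - \<pi>d * \<beta>) / \<beta> - (\<delta> - \<rho>) / \<sigma> > 0"
    and zs_def: "zs = (\<beta> * \<gamma> / (\<delta> + \<pi>d)) powr (1 / (\<beta> - 1))"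
    and theta_def: "\<theta> = (\<delta> + \<pi>d - \<pi>d * \<beta>) / \<beta> - (\<delta> - \<rho>) / \<sigma>"
    and c1: "c\<^sub>1 > 0"
    and z0: "z\<^sub>0 > 0" "z\<^sub>0 \<noteq> zs"
    and init_pos: "c\<^sub>0 > 0" "k\<^sub>0 > 0" "h\<^sub>0 > 0" "u\<^sub>0 > 0"
    and u0_def: "u\<^sub>0 = z\<^sub>0 * k\<^sub>0 / h\<^sub>0"
    and z_def: "z = (\<lambda>t. zs * z\<^sub>0 /
        ((zs powr (1 - \<beta>) - z\<^sub>0 powr (1 - \<beta>))
           * exp (- ((1 - \<beta>) * (\<delta> + \<pi>d) / \<beta>) * t) + z\<^sub>0 powr (1 - \<beta>))
          powr (1 / (1 - \<beta>)))"
    and F_def: "F = (\<lambda>t. integral {0..t} (\<lambda>s. z s powr ((\<sigma> - \<beta>) / \<sigma>) * exp (- \<theta> * s)))"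
    and K_def: "K = k\<^sub>0 / (c\<^sub>0 * z\<^sub>0 powr ((\<beta> - \<sigma>) / \<sigma>))"
    and hc0: "c\<^sub>0 * z\<^sub>0 powr (\<beta> / \<sigma>) = (c\<^sub>1 * \<delta> / ((1 - \<beta>) * \<gamma>)) powr (- 1 / \<sigma>)"
    and hF: "(F \<longlongrightarrow> K) at_top"
    and hu0: "\<gamma> * (1 - \<beta>) * (\<rho> - \<delta> + \<delta> * \<sigma>) / \<delta> =
        u\<^sub>0 / k\<^sub>0 * (\<sigma> * c\<^sub>0 * z\<^sub>0 powr (\<beta> - 1) - (\<rho> + \<pi>d - \<pi>d * \<sigma>) * k\<^sub>0 * z\<^sub>0 powr (\<beta> - 1)
                    + \<beta> * \<gamma> * (1 - \<sigma>) * k\<^sub>0)"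
    and c_def: "c = (\<lambda>t. c\<^sub>0 * z\<^sub>0 powr (\<beta> / \<sigma>) * exp (- ((\<rho> - \<delta>) / \<sigma>) * t) * z t powr (- \<beta> / \<sigma>))"
    and k_def: "k = (\<lambda>t. (K - F t) * c\<^sub>0 * z\<^sub>0 powr (\<beta> / \<sigma>) * z t powr (-1)
                    * exp ((\<delta> + \<pi>d - \<pi>d * \<beta>) / \<beta> * t))"
    and h_def: "h = (\<lambda>t. h\<^sub>0 *
        (\<sigma> * c\<^sub>0 * z\<^sub>0 powr (\<beta> / \<sigma>) * exp (- ((\<rho> - \<delta>) / \<sigma>) * t) * z t powr (\<beta> - \<beta> / \<sigma>)
         + (\<beta> * \<gamma> * (1 - \<sigma>) - (\<rho> + \<pi>d - \<pi>d * \<sigma>) * z t powr (\<beta> - 1))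
           * (K - F t) * c\<^sub>0 * z\<^sub>0 powr (\<beta> / \<sigma>) * exp ((\<delta> + \<pi>d - \<pi>d * \<beta>) / \<beta> * t))
        / (z\<^sub>0 * (\<sigma> * c\<^sub>0 * z\<^sub>0 powr (\<beta> - 1) - (\<rho> + \<pi>d - \<pi>d * \<sigma>) * k\<^sub>0 * z\<^sub>0 powr (\<beta> - 1)
                    + \<beta> * \<gamma> * (1 - \<sigma>) * k\<^sub>0)))"
    and u_def: "u = (\<lambda>t. u\<^sub>0 / k\<^sub>0 *
        (\<sigma> * c\<^sub>0 * z\<^sub>0 powr (\<beta> - 1) - (\<rho> + \<pi>d - \<pi>d * \<sigma>) * k\<^sub>0 * z\<^sub>0 powr (\<beta> - 1)
          + \<beta> * \<gamma> * (1 - \<sigma>) * k\<^sub>0)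
        * ((K - F t) /
           ((\<beta> * \<gamma> * (1 - \<sigma>) - (\<rho> + \<pi>d - \<pi>d * \<sigma>) * z t powr (\<beta> - 1)) * (K - F t)
            + \<sigma> * z t powr (\<beta> - \<beta> / \<sigma>) * exp (- \<theta> * t))))"
    and lam_def: "lam = (\<lambda>t. c\<^sub>1 * \<delta> / ((1 - \<beta>) * \<gamma>) * exp ((\<rho> - \<delta>) * t) * z t powr \<beta>)"
    and mu_def: "mu = (\<lambda>t. c\<^sub>1 * exp ((\<rho> - \<delta>) * t))"
  shows "(\<forall>t\<ge>0.
            lam t = c t powr (- \<sigma>)
          \<and> u t powr \<beta> = \<gamma> * (1 - \<beta>) * k t powr \<beta> * h t powr (- \<beta>) / \<delta> * (lam t / mu t)
          \<and> (k has_real_derivative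
                (\<gamma> * k t powr \<beta> * u t powr (1 - \<beta>) * h t powr (1 - \<beta>) - \<pi>d * k t - c t))
               (at t within {0..})
          \<and> (h has_real_derivative (\<delta> * (1 - u t) * h t)) (at t within {0..})
          \<and> (lam has_real_derivative
                (- lam t * \<gamma> * \<beta> * u t powr (1 - \<beta>) * k t powr (\<beta> - 1) * h t powr (1 - \<beta>)
                 + lam t * (\<rho> + \<pi>d))) (at t within {0..})
          \<and> (mu has_real_derivative (mu t * (\<rho> - \<delta>))) (at t within {0..})
          \<and> z t = h t * u t / k t)
       \<and> c 0 = c\<^sub>0 \<and> k 0 = k\<^sub>0 \<and> h 0 = h\<^sub>0 \<and> u 0 = u\<^sub>0 \<and> z 0 = z\<^sub>0
       \<and> ((\<lambda>t. exp (- \<rho> * t) * lam t * k t) \<longlongrightarrow> 0) at_top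
       \<and> ((\<lambda>t. exp (- \<rho> * t) * mu t * h t) \<longlongrightarrow> 0) at_top"
proof -
  interpret lucas_uzawa_solution \<rho> \<pi>d \<gamma> \<delta> \<beta> \<sigma> c\<^sub>1 z\<^sub>0 c\<^sub>0 k\<^sub>0 h\<^sub>0 u\<^sub>0
      z F c k h u lam mu zs \<theta> K
    by unfold_locales (fact assms | use cond2 theta_def in simp)+
  show ?thesis
    using consumption_eq_costate static_condition k_has_real_derivative h_has_real_derivative
      lam_has_real_derivative mu_has_real_derivative z_eq_h_u_div_k initial_values z_0
      transversality_k transversality_h
    by blast
qed

end
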